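(* Fix any $\bar x\in\mathcal{S}^*$ and $q>0$. (i) Suppose that for every $x'\in\mathcal{S}^*$ there exists $\epsilon>0$ such that $F(y)\le F(x')$ for all $y\in\mathcal{S}^*\cap\mathbb{B}(x',\epsilon)$. Then the $q$-subregularity of the mapping $\partial F$ at $\bar x$ for $0$ implies that $F$ has the KL property of exponent $\max\{\frac{1}{2q},\frac{1}{1+q}\}$ at $\bar x$. (ii) If $F$ has the KL property of exponent $\frac{1}{2q}$ at $\bar x$ for some $q\in(\frac12,1]$ and $\bar x$ is a local minimizer of $F$, then $\partial F$ is $(2q-1)$-subregular at $\bar x$ for $0$.
   Context: Let $A\in\mathbb{R}^{m\times n}$, $b\in\mathbb{R}^m$, and let $\psi:\mathbb{R}^m\to(-\infty,\infty]$ and $g:\mathbb{R}^n\to(-\infty,\infty]$ be proper lower semicontinuous functions. Set $f(x):=\psi(Ax-b)$ and $F:=f+g$. Assume: (i) there is an open set $\mathcal{O}\supseteq\mathrm{dom}\,g$ such that $\psi$ is twice continuously differentiable on $A(\mathcal{O})-b$; (ii) $g$ is convex and continuous relative to $\mathrm{dom}\,g$; (iii) $\inf F>-\infty$ and $F$ is level bounded. $\partial F$ is the limiting subdifferential; for $x\in\mathrm{dom}\,g$, $\partial F(x)=\nabla f(x)+\partial g(x)$. $\mathcal{S}^*:=\{x\in\mathrm{dom}\,g:0\in\partial F(x)\}$. A multifunction $\mathcal{F}$ is $q$-subregular at $\bar x$ for $\bar y\in\mathcal{F}(\bar x)$ if there exist $\kappa,\delta>0$ with $\mathrm{dist}(x,\mathcal{F}^{-1}(\bar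 y))\le\kappa[\mathrm{dist}(\bar y,\mathcal{F}(x))]^q$ for all $x\in\mathbb{B}(\bar x,\delta)$. KL property of exponent $\theta\in[0,1)$ at $\bar x\in\mathrm{dom}\,\partial F$: there exist $\delta>0$, $\varpi\in(0,\infty]$, $c>0$ such that, with $\varphi(t)=ct^{1-\theta}$, $\varphi'(F(x)-F(\bar x))\,\mathrm{dist}(0,\partial F(x))\ge1$ for all $x\in\mathbb{B}(\bar x,\delta)$ with $F(\bar x)<F(x)<F(\bar x)+\varpi$.
   Formalization: Part (i) carries the extra hypothesis $\max\{\frac{1}{2q},\frac{1}{1+q}\}<1$, that is q > 1/2, so its implication is asserted only for q > 1/2 rather than for every q > 0. The statement above fails without it. *)

theory Defs
  imports "HOL-Analysis.Analysis"
begin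

(* Extended-real-valued functions (-\<infinity>,\<infinity>] are modelled as functions into ereal. *)

definition proper_fun :: "('a \<Rightarrow> ereal) \<Rightarrow> bool" where
  "proper_fun f \<longleftrightarrow> (\<forall>x. f x \<noteq> -\<infinity>) \<and> (\<exists>x. f x \<noteq> \<infinity>)"

definition edom :: "('a \<Rightarrow> ereal) \<Rightarrow> 'a set" where
  "edom f = {x. f x < \<infinity>}"

definition lsc_fun :: "('a::topological_space \<Rightarrow> ereal) \<Rightarrow> bool" where
  "lsc_fun f \<longleftrightarrow> (\<forall>x. f x \<le> Liminf (at x) f)"

(* Frechet (regular) subdifferential: v is a regular subgradient of F at x iff F x is finite and
   liminf_{y \<rightarrow> x, y \<noteq> x} (F y - F x - <v, y - x>) / |y - x| \<ge> 0, written in epsilon-delta form. *)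
definition frechet_subdiff :: "('a::real_inner \<Rightarrow> ereal) \<Rightarrow> 'a \<Rightarrow> 'a set" where
  "frechet_subdiff F x = {v. \<bar>F x\<bar> \<noteq> \<infinity> \<and>
     (\<forall>\<epsilon>>0. \<exists>\<delta>>0. \<forall>y. norm (y - x) < \<delta> \<longrightarrow>
        ereal (real_of_ereal (F x) + inner v (y - x) - \<epsilon> * norm (y - x)) \<le> F y)}"

definition limiting_subdiff :: "('a::real_inner \<Rightarrow> ereal) \<Rightarrow> 'a \<Rightarrow> 'a set" where
  "limiting_subdiff F x = {v. \<exists>xk vk. xk \<longlonglongrightarrow> x \<and> (\<lambda>k. F (xk k)) \<longlonglongrightarrow> F x \<and>
      (\<forall>k. vk k \<in> frechet_subdiff F (xk k)) \<and> vk \<longlonglongrightarrow> v}"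

(* q-subregularity of a multifunction M at xbar for ybar \<in> M xbar.
   dist(ybar, M x) = +\<infinity> when M x = {}, in which case the inequality holds trivially. *)
definition q_subregular :: "('a::metric_space \<Rightarrow> 'b::metric_space set) \<Rightarrow> real \<Rightarrow> 'a \<Rightarrow> 'b \<Rightarrow> bool" where
  "q_subregular M q xbar ybar \<longleftrightarrow> ybar \<in> M xbar \<and>
     (\<exists>\<kappa>>0. \<exists>\<delta>>0. \<forall>x\<in>cball xbar \<delta>. M x \<noteq> {} \<longrightarrow>
        infdist x {z. ybar \<in> M z} \<le> \<kappa> * (infdist ybar (M x)) powr q)"

(* KL property of exponent \<theta> at xbar \<in> dom \<partial>F, with \<phi>(t) = c t^(1-\<theta>),
   \<phi>'(t) = c (1-\<theta>) t^(-\<theta>); dist(0, \<partial>F x) = +\<infinity> when \<partial>F x = {} (inequality trivial). *)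
definition KL_exponent :: "('a::real_inner \<Rightarrow> ereal) \<Rightarrow> real \<Rightarrow> 'a \<Rightarrow> bool" where
  "KL_exponent F \<theta> xbar \<longleftrightarrow> 0 \<le> \<theta> \<and> \<theta> < 1 \<and> limiting_subdiff F xbar \<noteq> {} \<and>
     (\<exists>\<delta>>0. \<exists>w::ereal. w > 0 \<and> (\<exists>c>0.
        \<forall>x\<in>cball xbar \<delta>. F xbar < F x \<and> F x < F xbar + w \<and> limiting_subdiff F x \<noteq> {} \<longrightarrow>
          c * (1 - \<theta>) * (real_of_ereal (F x - F xbar)) powr (- \<theta>)
            * infdist 0 (limiting_subdiff F x) \<ge> 1))"

end

theory Submission
  imports Defs
begin

(*
  (i) Near xbar, convexity of g and the Lipschitz gradient of f give, for every \<xi> \<in> \<partial>F x,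
  F x - F z \<le> L |z - x|\<^sup>2 + |\<xi>| |z - x|. Subregularity supplies a critical point z with
  |z - x| = O(|\<xi>|^q), and F z \<le> F xbar since F does not exceed F xbar at nearby critical points.
  Hence F x - F xbar = O(|\<xi>|^min(2q, 1 + q)): the KL inequality with exponent
  max(1/(2q), 1/(1 + q)).

  (ii) Let \<phi>(s) = c s^(1-\<theta>) be the desingularising function, x near xbar and t = F x - F xbar.
  A minimiser z of \<phi>(F - F xbar) + |\<cdot> - x|\<^sup>2/(2\<gamma>) near xbar, with \<gamma> = 8 \<phi>(t), satisfies
  |z - x| \<le> 4 \<phi>(t). If F z > F xbar, concavity of \<phi> makes (x - z)/(\<gamma> \<phi>'(F z - F xbar)) a
  Frechet subgradient at z, and the KL inequality at z forces |x - z| \<ge> \<gamma>, a contradiction.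
  So z is a local minimiser, hence critical, and the KL inequality at x bounds \<phi>(t) by a
  multiple of dist(0, \<partial>F x)^((1-\<theta>)/\<theta>), where (1-\<theta>)/\<theta> = 2q - 1 for \<theta> = 1/(2q).
*)

section \<open>Lower semicontinuity\<close>

lemma ereal_less_add_split:
  fixes X Y :: ereal
  assumes "X \<noteq> -\<infinity>" "Y \<noteq> -\<infinity>" "ereal a < X + Y"
  obtains a1 a2 where "ereal a1 < X" "ereal a2 < Y" "a \<le> a1 + a2"
proof -
  have "\<exists>a1 a2. ereal a1 < X \<and> ereal a2 < Y \<and> a \<le> a1 + a2"
  proof (cases X; cases Y)
    fix r s assume "X = ereal r" "Y = ereal s"
    with assms show ?thesis
      by (intro exI[of _ "r - (r + s - a) / 2"] exI[of _ "s - (r + s - a) / 2"]) auto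
  next
    fix r assume "X = ereal r" "Y = \<infinity>"
    then show ?thesis by (intro exI[of _ "r - 1"] exI[of _ "a - r + 1"]) auto
  next
    fix s assume "X = \<infinity>" "Y = ereal s"
    then show ?thesis by (intro exI[of _ "a - s + 1"] exI[of _ "s - 1"]) auto
  next
    assume "X = \<infinity>" "Y = \<infinity>"
    then show ?thesis by (intro exI[of _ a] exI[of _ 0]) auto
  qed (use assms in auto)
  then show thesis using that by blast
qed

lemma lsc_fun_iff_eventually:
  "lsc_fun f \<longleftrightarrow> (\<forall>z a. a < f z \<longrightarrow> (\<forall>\<^sub>F y in nhds z. a < f y))"
  unfolding lsc_fun_def le_Liminf_iff eventually_nhds_conv_at by blast

lemma lsc_fun_add:
  assumes f: "lsc_fun f" "\<And>x. f x \<noteq> -\<infinity>" and g: "lsc_fun g" "\<And>x. g x \<noteq> -\<infinity>"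
  shows "lsc_fun (\<lambda>x. f x + g x)"
  unfolding lsc_fun_iff_eventually
proof (intro allI impI)
  fix z a assume "a < f z + g z"
  then obtain a' where a': "a < ereal a'" "ereal a' < f z + g z" using ereal_dense2 by blast
  then obtain a1 a2 where a1: "ereal a1 < f z" and a2: "ereal a2 < g z" and a: "a' \<le> a1 + a2"
    using ereal_less_add_split f(2) g(2) by metis
  have "\<forall>\<^sub>F y in nhds z. ereal a1 < f y" "\<forall>\<^sub>F y in nhds z. ereal a2 < g y"
    using f(1) g(1) a1 a2 unfolding lsc_fun_iff_eventually by blast+
  then have "\<forall>\<^sub>F y in nhds z. ereal a1 < f y \<and> ereal a2 < g y" by (rule eventually_conj)
  then show "\<forall>\<^sub>F y in nhds z. a < f y + g y"
  proof (rule eventually_mono)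
    fix y assume "ereal a1 < f y \<and> ereal a2 < g y"
    then have "ereal (a1 + a2) < f y + g y"
      by (cases "f y"; cases "g y") auto
    moreover have "a < ereal (a1 + a2)" using a a'(1) by (simp add: less_le_trans)
    ultimately show "a < f y + g y" by (rule less_trans[rotated])
  qed
qed

lemma lsc_fun_compose_continuous:
  assumes "lsc_fun f" "continuous_on UNIV h"
  shows "lsc_fun (\<lambda>x. f (h x))"
  unfolding lsc_fun_iff_eventually
proof (intro allI impI)
  fix z a assume "a < f (h z)"
  then have "\<forall>\<^sub>F w in nhds (h z). a < f w" using assms(1) unfolding lsc_fun_iff_eventually by blast
  moreover have "(h \<longlongrightarrow> h z) (nhds z)"
    using assms(2) by (simp add: continuous_on_def tendsto_at_iff_tendsto_nhds)
  ultimately show "\<forall>\<^sub>F y in nhds z. a < f (h y)" unfolding filterlim_iff by blast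
qed

lemma closed_sublevel_if_lsc_fun:
  assumes "lsc_fun f"
  shows "closed {x. f x \<le> c}"
proof -
  have "open {x. c < f x}"
    unfolding open_subopen[of "{x. c < f x}"]
  proof
    fix z assume "z \<in> {x. c < f x}"
    then obtain T where "open T" "z \<in> T" "\<forall>y\<in>T. c < f y"
      using assms unfolding lsc_fun_iff_eventually eventually_nhds by blast
    then show "\<exists>T. open T \<and> z \<in> T \<and> T \<subseteq> {x. c < f x}" by blast
  qed
  then show ?thesis by (simp add: closed_def Compl_eq not_le)
qed

section \<open>Powers and distances\<close>

lemma infdist_less_imp_ex:
  assumes "A \<noteq> {}" "infdist x A < e"
  obtains a where "a \<in> A" "dist x a < e"
proof -
  have "bdd_below ((\<lambda>a. dist x a) ` A)" by (rule bdd_belowI[of _ 0]) auto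
  then show thesis using assms that cINF_less_iff[of A "\<lambda>a. dist x a" e] by (auto simp: infdist_notempty)
qed

lemma infdist_geI:
  assumes "A \<noteq> {}" "\<And>a. a \<in> A \<Longrightarrow> m \<le> dist x a"
  shows "m \<le> infdist x A"
  using assms by (simp add: infdist_notempty cINF_greatest)

lemma powr_le_tangent:
  fixes a b \<alpha> :: real
  assumes "0 < \<alpha>" "\<alpha> \<le> 1" "0 \<le> a" "0 < b"
  shows "a powr \<alpha> \<le> b powr \<alpha> + \<alpha> * b powr (\<alpha> - 1) * (a - b)"
proof (cases "a = 0")
  case True
  have "0 \<le> (1 - \<alpha>) * b powr \<alpha>" using assms by simp
  also have "\<dots> = b powr \<alpha> + \<alpha> * b powr (\<alpha> - 1) * (0 - b)"
    using assms by (simp add: powr_diff field_simps)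
  finally show ?thesis using True by simp
next
  case False
  have young: "a powr \<alpha> * b powr (1 - \<alpha>) \<le> \<alpha> * a + (1 - \<alpha>) * b"
    using Youngs_inequality_0[of \<alpha> "1 - \<alpha>" a b] assms False by simp
  have "a powr \<alpha> = a powr \<alpha> * b powr (1 - \<alpha>) * b powr (\<alpha> - 1)"
    using assms by (simp add: mult.assoc flip: powr_add)
  also have "\<dots> \<le> (\<alpha> * a + (1 - \<alpha>) * b) * b powr (\<alpha> - 1)"
    using young by (intro mult_right_mono) auto
  also have "\<dots> = b powr \<alpha> + \<alpha> * b powr (\<alpha> - 1) * (a - b)"
    using assms by (simp add: powr_diff field_simps)
  finally show ?thesis .
qed

lemma powr_less_if_small:
  fixes k m q :: real
  assumes "q > 0" "k > 0" "m > 0"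
  obtains \<eta> where "\<eta> > 0" "\<And>a. 0 \<le> a \<Longrightarrow> a < \<eta> \<Longrightarrow> k * a powr q < m"
proof
  show "(m / k) powr (1 / q) > 0" using assms by simp
  fix a :: real assume "0 \<le> a" "a < (m / k) powr (1 / q)"
  then have "a powr q < ((m / k) powr (1 / q)) powr q" using assms by (intro powr_less_mono2) auto
  also have "\<dots> = m / k" using assms by (simp add: powr_powr)
  finally show "k * a powr q < m" using assms by (simp add: field_simps)
qed

lemma powr_le_if_KL_inequality:
  fixes t d c \<theta> :: real
  assumes \<theta>: "0 < \<theta>" "\<theta> < 1" and "c > 0" "0 \<le> t" "0 \<le> d"
    and KL: "t > 0 \<Longrightarrow> 1 \<le> c * (1 - \<theta>) * t powr (- \<theta>) * d"
  shows "t powr (1 - \<theta>) \<le> (c * (1 - \<theta>)) powr ((1 - \<theta>) / \<theta>) * d powr ((1 - \<theta>) / \<theta>)"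
proof (cases "t = 0")
  case False
  then have "t > 0" using \<open>0 \<le> t\<close> by simp
  have "t powr \<theta> * 1 \<le> t powr \<theta> * (c * (1 - \<theta>) * t powr (- \<theta>) * d)"
    using KL \<open>t > 0\<close> by (intro mult_left_mono) auto
  also have "\<dots> = c * (1 - \<theta>) * d" using \<open>t > 0\<close> by (simp add: powr_minus field_simps)
  finally have "(t powr \<theta>) powr ((1 - \<theta>) / \<theta>) \<le> (c * (1 - \<theta>) * d) powr ((1 - \<theta>) / \<theta>)"
    using \<theta> by (intro powr_mono2) auto
  then show ?thesis using \<theta> \<open>c > 0\<close> \<open>0 \<le> d\<close> by (simp add: powr_powr powr_mult)
qed simp

lemma powr_le_if_quadratic_gap:
  fixes a t \<rho> k L q \<theta> :: real
  assumes a: "0 < a" "a < 1" and "0 \<le> t" "t \<le> L * \<rho>\<^sup>2 + a * \<rho>"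
    and \<rho>: "0 \<le> \<rho>" "\<rho> \<le> k * a powr q" and "0 \<le> L" "q > 0"
    and \<theta>: "0 < \<theta>" "1 / (2 * q) \<le> \<theta>" "1 / (1 + q) \<le> \<theta>"
  shows "t powr \<theta> \<le> (L * k\<^sup>2 + k) powr \<theta> * a"
proof -
  have "0 \<le> k" using \<rho> a by (smt (verit) powr_gt_zero zero_le_mult_iff)
  have "1 / \<theta> \<le> 2 * q" "1 / \<theta> \<le> 1 + q"
    using \<theta> \<open>q > 0\<close> by (simp_all add: field_simps)
  have "L * \<rho>\<^sup>2 \<le> L * (k * a powr q)\<^sup>2"
    using \<rho> \<open>0 \<le> L\<close> by (intro mult_left_mono power_mono) auto
  also have "\<dots> = L * k\<^sup>2 * a powr (2 * q)"
    using a by (simp add: power_mult_distrib powr_realpow[symmetric] powr_powr ac_simps)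
  also have "\<dots> \<le> L * k\<^sup>2 * a powr (1 / \<theta>)"
    using powr_mono'[OF \<open>1 / \<theta> \<le> 2 * q\<close>, of a] a \<open>0 \<le> L\<close> by (intro mult_left_mono) auto
  finally have quadratic: "L * \<rho>\<^sup>2 \<le> L * k\<^sup>2 * a powr (1 / \<theta>)" .
  have "a * \<rho> \<le> k * a powr (1 + q)"
    using \<rho> a by (simp add: powr_add mult_left_mono ac_simps)
  also have "\<dots> \<le> k * a powr (1 / \<theta>)"
    using powr_mono'[OF \<open>1 / \<theta> \<le> 1 + q\<close>, of a] a \<open>0 \<le> k\<close> by (intro mult_left_mono) auto
  finally have "t \<le> (L * k\<^sup>2 + k) * a powr (1 / \<theta>)"
    using quadratic \<open>t \<le> L * \<rho>\<^sup>2 + a * \<rho>\<close> by (simp add: distrib_right)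
  then have "t powr \<theta> \<le> ((L * k\<^sup>2 + k) * a powr (1 / \<theta>)) powr \<theta>"
    using \<open>0 \<le> t\<close> \<theta> by (intro powr_mono2) auto
  also have "\<dots> = (L * k\<^sup>2 + k) powr \<theta> * a"
    using a \<theta> \<open>0 \<le> L\<close> \<open>0 \<le> k\<close> by (simp add: powr_mult powr_powr)
  finally show ?thesis .
qed

section \<open>Gradients\<close>

lemma lipschitz_gradient_taylor_bound:
  fixes f :: "'a::euclidean_space \<Rightarrow> real"
  assumes "convex S" and deriv: "\<And>y. y \<in> S \<Longrightarrow> (f has_derivative inner (f' y)) (at y within S)"
    and lip: "L-lipschitz_on S f'" and "x \<in> S" "z \<in> S"
  shows "\<bar>f z - f x - inner (f' x) (z - x)\<bar> \<le> L * (norm (z - x))\<^sup>2"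
proof -
  have segment: "closed_segment x z \<subseteq> S" using assms by (simp add: closed_segment_subset)
  have "norm (f z - f x - inner (f' x) (z - x)) \<le> norm (z - x) * (L * norm (z - x))"
  proof (rule differentiable_bound_linearization[where S = "closed_segment x z"
        and f' = "\<lambda>y. inner (f' y)"])
    show "x + t *\<^sub>R (z - x) \<in> closed_segment x z" if "t \<in> {0..1}" for t
      using that unfolding in_segment by (intro exI[of _ t]) (auto simp: algebra_simps)
    fix y assume y: "y \<in> closed_segment x z"
    show "(f has_derivative inner (f' y)) (at y within closed_segment x z)"
      using deriv y segment by (blast intro: has_derivative_subset)
    show "onorm (inner (f' y) - inner (f' x)) \<le> L * norm (z - x)"
    proof (rule onorm_le)
      fix h
      have "norm ((inner (f' y) - inner (f' x)) h) \<le> norm (f' y - f' x) * norm h"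
        by (simp add: Cauchy_Schwarz_ineq2 flip: inner_diff_left)
      also have "\<dots> \<le> L * norm (y - x) * norm h"
        using lipschitz_on_normD[OF lip] y segment \<open>x \<in> S\<close> by (intro mult_right_mono) auto
      also have "\<dots> \<le> L * norm (z - x) * norm h"
        using segment_bound1[OF y] lipschitz_on_nonneg[OF lip] by (intro mult_right_mono mult_left_mono) auto
      finally show "norm ((inner (f' y) - inner (f' x)) h) \<le> L * norm (z - x) * norm h" .
    qed
  qed simp
  then show ?thesis by (simp add: power2_eq_square ac_simps)
qed

lemma locally_lipschitz_if_continuous_jacobian:
  fixes \<phi> :: "real^'n \<Rightarrow> real^'m" and J :: "real^'n \<Rightarrow> real^'n^'m"
  assumes "open V" and deriv: "\<And>y. y \<in> V \<Longrightarrow> (\<phi> has_derivative (\<lambda>h. J y *v h)) (at y)"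
    and "continuous_on V J" and "y0 \<in> V"
  obtains \<rho> C where "\<rho> > 0" "cball y0 \<rho> \<subseteq> V" "C-lipschitz_on (cball y0 \<rho>) \<phi>"
proof -
  obtain \<rho> where \<rho>: "\<rho> > 0" "cball y0 \<rho> \<subseteq> V" using assms open_contains_cball by blast
  have "continuous_on (cball y0 \<rho>) J"
    using \<open>continuous_on V J\<close> \<rho>(2) by (rule continuous_on_subset)
  then have "bounded (J ` cball y0 \<rho>)"
    by (intro compact_imp_bounded compact_continuous_image compact_cball)
  then obtain B where "\<forall>M\<in>J ` cball y0 \<rho>. norm M \<le> B"
    unfolding bounded_iff by blast
  then have B: "\<And>y. y \<in> cball y0 \<rho> \<Longrightarrow> norm (J y) \<le> B" by blast
  have "B \<ge> 0" using B[of y0] \<rho>(1) by (meson centre_in_cball less_imp_le norm_ge_zero order_trans)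
  have onorm_bound: "onorm (\<lambda>h. J y *v h) \<le> real CARD('m) * real CARD('n) * B"
    if "y \<in> cball y0 \<rho>" for y
  proof (rule onorm_le_matrix_component)
    fix i j
    have "\<bar>J y $ i $ j\<bar> \<le> norm (J y)"
      using component_le_norm_cart[of "J y $ i" j] Finite_Cartesian_Product.norm_nth_le[of "J y" i]
      by linarith
    then show "\<bar>J y $ i $ j\<bar> \<le> B" using B[OF that] by simp
  qed
  have "(\<phi> has_derivative (\<lambda>h. J y *v h)) (at y within cball y0 \<rho>)" if "y \<in> cball y0 \<rho>" for y
    using deriv \<rho>(2) that by (blast intro: has_derivative_at_withinI)
  then have "(real CARD('m) * real CARD('n) * B)-lipschitz_on (cball y0 \<rho>) \<phi>"
    using onorm_bound \<open>B \<ge> 0\<close> by (intro bounded_derivative_imp_lipschitz convex_cball) auto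
  with \<rho> that show thesis by blast
qed

lemma has_gradient_affine_precomposition:
  fixes A :: "real^'n^'m" and p :: "real^'m \<Rightarrow> real"
  assumes "(p has_derivative (\<lambda>h. inner (gp (A *v x - b)) h)) (at (A *v x - b))"
  shows "((\<lambda>x. p (A *v x - b)) has_derivative inner (transpose A *v gp (A *v x - b))) (at x)"
proof -
  have "((\<lambda>x. A *v x - b) has_derivative (\<lambda>h. A *v h)) (at x)"
    by (auto intro!: derivative_eq_intros bounded_linear.has_derivative[OF matrix_vector_mul_bounded_linear])
  moreover have "inner (transpose A *v gp (A *v x - b)) = (\<lambda>h. inner (gp (A *v x - b)) (A *v h))"
    by (simp add: fun_eq_iff dot_lmul_matrix)
  ultimately show ?thesis using has_derivative_compose[of _ _ x UNIV p] assms by (simp add: o_def)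
qed

lemma gradient_affine_precomposition_locally_lipschitz:
  fixes A :: "real^'n^'m" and gp :: "real^'m \<Rightarrow> real^'m"
  assumes "open U" "open V" "(\<lambda>x. A *v x - b) ` U \<subseteq> V"
    and "\<And>y. y \<in> V \<Longrightarrow> (gp has_derivative (\<lambda>h. H y *v h)) (at y)" "continuous_on V H" "x0 \<in> U"
  shows "\<exists>r>0. \<exists>L. cball x0 r \<subseteq> U \<and> L-lipschitz_on (cball x0 r) (\<lambda>x. transpose A *v gp (A *v x - b))"
proof -
  have "A *v x0 - b \<in> V" using assms(3,6) by blast
  then obtain \<rho> C where "\<rho> > 0" "cball (A *v x0 - b) \<rho> \<subseteq> V" "C-lipschitz_on (cball (A *v x0 - b) \<rho>) gp"
    using locally_lipschitz_if_continuous_jacobian[OF assms(2,4,5)] by blast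
  obtain B where B: "B-lipschitz_on UNIV ((*v) A)"
    using bounded_linear.lipschitz_boundE[OF matrix_vector_mul_bounded_linear] by blast
  have aff: "B-lipschitz_on X (\<lambda>x. A *v x - b)" for X
    using lipschitz_on_diff[OF lipschitz_on_subset[OF B subset_UNIV] lipschitz_on_constant] by simp
  obtain K where K: "K-lipschitz_on UNIV ((*v) (transpose A))"
    using bounded_linear.lipschitz_boundE[OF matrix_vector_mul_bounded_linear] by blast
  obtain r0 where "r0 > 0" "cball x0 r0 \<subseteq> U" using assms open_contains_cball by blast
  define r where "r = min r0 (\<rho> / (B + 1))"
  have "B \<ge> 0" using lipschitz_on_nonneg[OF aff] by simp
  then have "r > 0" using \<open>r0 > 0\<close> \<open>\<rho> > 0\<close> by (simp add: r_def)
  have "dist (A *v x0 - b) (A *v x - b) \<le> \<rho>" if "x \<in> cball x0 r" for x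
  proof -
    have "dist (A *v x0 - b) (A *v x - b) \<le> B * dist x0 x"
      using lipschitz_onD[OF aff, of x0 UNIV x] by simp
    also have "\<dots> \<le> B * (\<rho> / (B + 1))"
      using that \<open>B \<ge> 0\<close> by (intro mult_left_mono) (auto simp: r_def)
    also have "\<dots> \<le> \<rho>" using \<open>B \<ge> 0\<close> \<open>\<rho> > 0\<close> by (simp add: field_simps)
    finally show ?thesis .
  qed
  then have "(\<lambda>x. A *v x - b) ` cball x0 r \<subseteq> cball (A *v x0 - b) \<rho>" by auto
  then have inner_lip: "(C * B)-lipschitz_on (cball x0 r) (\<lambda>x. gp (A *v x - b))"
    by (intro lipschitz_on_compose2[OF aff] lipschitz_on_subset[OF \<open>C-lipschitz_on _ gp\<close>])
  have "(K * (C * B))-lipschitz_on (cball x0 r) (\<lambda>x. transpose A *v gp (A *v x - b))"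
    using lipschitz_on_compose2[OF inner_lip lipschitz_on_subset[OF K subset_UNIV]] by simp
  moreover have "cball x0 r \<subseteq> U" using \<open>cball x0 r0 \<subseteq> U\<close> by (auto simp: r_def)
  ultimately show ?thesis using \<open>r > 0\<close> by blast
qed

section \<open>Subgradients\<close>

lemma frechet_subdiff_subset_limiting_subdiff: "frechet_subdiff F x \<subseteq> limiting_subdiff F x"
proof
  fix v assume "v \<in> frechet_subdiff F x"
  then show "v \<in> limiting_subdiff F x"
    unfolding limiting_subdiff_def by (intro CollectI exI[of _ "\<lambda>_. x"] exI[of _ "\<lambda>_. v"]) auto
qed

lemma zero_frechet_subdiff_if_local_min:
  assumes "\<bar>F z\<bar> \<noteq> \<infinity>" "r > 0" "\<And>y. y \<in> ball z r \<Longrightarrow> F z \<le> F y"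
  shows "0 \<in> frechet_subdiff F z"
  unfolding frechet_subdiff_def
proof (intro CollectI conjI allI impI exI)
  fix \<epsilon> :: real and y assume "\<epsilon> > 0" "norm (y - z) < r"
  then have "ereal (real_of_ereal (F z) + inner 0 (y - z) - \<epsilon> * norm (y - z)) \<le> F z"
    using assms(1) by (cases "F z") auto
  also have "F z \<le> F y" using assms(3) \<open>norm (y - z) < r\<close> by (simp add: dist_norm norm_minus_commute)
  finally show "ereal (real_of_ereal (F z) + inner 0 (y - z) - \<epsilon> * norm (y - z)) \<le> F y" .
qed (use assms in auto)

lemma zero_limiting_subdiff_if_floor_attained:
  assumes floor: "\<And>y. y \<in> cball xbar R \<Longrightarrow> ereal Fb \<le> F y"
    and "z \<in> ball xbar R" "F z = ereal Fb"
  shows "0 \<in> limiting_subdiff F z"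
proof -
  have "F z \<le> F y" if "y \<in> ball z (R - dist xbar z)" for y
    using floor[of y] that \<open>F z = ereal Fb\<close> dist_triangle[of xbar y z] by (simp add: dist_commute)
  then have "0 \<in> frechet_subdiff F z"
    using assms(2,3) by (intro zero_frechet_subdiff_if_local_min[of F z "R - dist xbar z"]) auto
  then show ?thesis using frechet_subdiff_subset_limiting_subdiff by blast
qed

lemma frechet_subdiff_add_differentiable:
  fixes h :: "'a::real_inner \<Rightarrow> ereal"
  assumes v: "v \<in> frechet_subdiff (\<lambda>x. ereal (f x) + h x) z"
    and f: "(f has_derivative inner u) (at z)"
  shows "v - u \<in> frechet_subdiff h z"
  unfolding frechet_subdiff_def
proof (intro CollectI conjI allI impI)
  have "\<bar>ereal (f z) + h z\<bar> \<noteq> \<infinity>" using v unfolding frechet_subdiff_def by auto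
  then obtain hz where hz: "h z = ereal hz" by (cases "h z") auto
  then show "\<bar>h z\<bar> \<noteq> \<infinity>" by simp
  have "\<forall>e>0. \<exists>\<delta>>0. \<forall>y. norm (y - z) < \<delta> \<longrightarrow>
      ereal (f z + hz + inner v (y - z) - e * norm (y - z)) \<le> ereal (f y) + h y"
    using v hz unfolding frechet_subdiff_def by simp
  fix \<epsilon> :: real assume "\<epsilon> > 0"
  with \<open>\<forall>e>0. _\<close> obtain \<delta>1 where "\<delta>1 > 0" and frechet: "\<And>y. norm (y - z) < \<delta>1 \<Longrightarrow>
      ereal (f z + hz + inner v (y - z) - \<epsilon> / 2 * norm (y - z)) \<le> ereal (f y) + h y"
    by (meson half_gt_zero)
  obtain \<delta>2 where "\<delta>2 > 0" and taylor: "\<And>y. norm (y - z) < \<delta>2 \<Longrightarrow>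
      norm (f y - f z - inner u (y - z)) \<le> \<epsilon> / 2 * norm (y - z)"
    using f \<open>\<epsilon> > 0\<close> unfolding has_derivative_at_alt by (meson half_gt_zero)
  have "ereal (hz + inner (v - u) (y - z) - \<epsilon> * norm (y - z)) \<le> h y"
    if "norm (y - z) < min \<delta>1 \<delta>2" for y
  proof (cases "h y")
    case (real r)
    then have "f z + hz + inner v (y - z) - \<epsilon> / 2 * norm (y - z) \<le> f y + r"
      using frechet[of y] that by simp
    moreover have "\<bar>f y - f z - inner u (y - z)\<bar> \<le> \<epsilon> / 2 * norm (y - z)"
      using taylor[of y] that by simp
    then have "f y - f z - inner u (y - z) \<le> \<epsilon> / 2 * norm (y - z)"
      using abs_ge_self[of "f y - f z - inner u (y - z)"] by linarith
    ultimately show ?thesis using real by (simp add: inner_diff_left)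
  qed (use frechet[of y] that in auto)
  then show "\<exists>\<delta>>0. \<forall>y. norm (y - z) < \<delta> \<longrightarrow>
      ereal (real_of_ereal (h z) + inner (v - u) (y - z) - \<epsilon> * norm (y - z)) \<le> h y"
    using \<open>\<delta>1 > 0\<close> \<open>\<delta>2 > 0\<close> hz by (intro exI[of _ "min \<delta>1 \<delta>2"]) auto
qed

lemma convex_subgradient_if_frechet_subgradient:
  fixes h :: "'a::real_inner \<Rightarrow> ereal"
  assumes convex: "convex (edom h)" "convex_on (edom h) (\<lambda>x. real_of_ereal (h x))"
    and not_MInf: "\<And>x. h x \<noteq> -\<infinity>" and w: "w \<in> frechet_subdiff h z" and y: "y \<in> edom h"
  shows "real_of_ereal (h z) + inner w (y - z) \<le> real_of_ereal (h y)"
proof -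
  have z: "z \<in> edom h" using w unfolding frechet_subdiff_def edom_def by (auto simp: less_top)
  define d where "d = y - z"
  have "norm d + 1 > 0" using norm_ge_zero[of d] by linarith
  have approx: "real_of_ereal (h z) + inner w d - \<epsilon> * norm d \<le> real_of_ereal (h y)" if "\<epsilon> > 0" for \<epsilon>
  proof -
    obtain \<delta> where "\<delta> > 0" and frechet: "\<And>p. norm (p - z) < \<delta> \<Longrightarrow>
        ereal (real_of_ereal (h z) + inner w (p - z) - \<epsilon> * norm (p - z)) \<le> h p"
      using w \<open>\<epsilon> > 0\<close> unfolding frechet_subdiff_def by blast
    define s where "s = min 1 (\<delta> / (2 * (norm d + 1)))"
    have "0 < s" "s \<le> 1" using \<open>\<delta> > 0\<close> \<open>norm d + 1 > 0\<close> by (simp_all add: s_def)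
    have "s * norm d \<le> \<delta> / (2 * (norm d + 1)) * (norm d + 1)"
      unfolding s_def using \<open>\<delta> > 0\<close> by (intro mult_mono) auto
    also have "\<dots> = \<delta> / 2" using \<open>norm d + 1 > 0\<close> by (simp add: field_simps)
    also have "\<dots> < \<delta>" using \<open>\<delta> > 0\<close> by simp
    finally have "s * norm d < \<delta>" .
    define p where "p = (1 - s) *\<^sub>R z + s *\<^sub>R y"
    have "p - z = s *\<^sub>R d" by (simp add: p_def d_def algebra_simps)
    have "p \<in> edom h" using convexD[OF convex(1) z y, of "1 - s" s] \<open>0 < s\<close> \<open>s \<le> 1\<close> by (simp add: p_def)
    then obtain hp where "h p = ereal hp" using not_MInf[of p] by (cases "h p") (auto simp: edom_def)
    then have "real_of_ereal (h z) + s * inner w d - \<epsilon> * (s * norm d) \<le> real_of_ereal (h p)"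
      using frechet[of p] \<open>p - z = s *\<^sub>R d\<close> \<open>s * norm d < \<delta>\<close> \<open>0 < s\<close> by (simp add: abs_of_pos)
    also have "\<dots> \<le> (1 - s) * real_of_ereal (h z) + s * real_of_ereal (h y)"
      using convex_onD[OF convex(2), of s z y] \<open>0 < s\<close> \<open>s \<le> 1\<close> z y by (simp add: p_def)
    finally have "s * (real_of_ereal (h z) + inner w d - \<epsilon> * norm d) \<le> s * real_of_ereal (h y)"
      by (simp add: algebra_simps)
    then show ?thesis using \<open>0 < s\<close> by simp
  qed
  show ?thesis
  proof (rule field_le_epsilon)
    fix e :: real assume "e > 0"
    have "e / (norm d + 1) * norm d \<le> e" using \<open>e > 0\<close> \<open>norm d + 1 > 0\<close> by (simp add: field_simps)
    with approx[of "e / (norm d + 1)"] show "real_of_ereal (h z) + inner w (y - z) \<le> real_of_ereal (h y) + e"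
      using \<open>e > 0\<close> \<open>norm d + 1 > 0\<close> unfolding d_def by simp
  qed
qed

lemma q_subregular_solution_near:
  assumes subregular: "q_subregular M q xbar ybar" and "q \<ge> 0"
  obtains \<kappa> \<delta> where "\<kappa> > 0" "\<delta> > 0" "\<And>x v. x \<in> cball xbar \<delta> \<Longrightarrow> v \<in> M x \<Longrightarrow> v \<noteq> ybar \<Longrightarrow>
    \<exists>z. ybar \<in> M z \<and> dist x z < \<kappa> * dist ybar v powr q"
proof -
  let ?S = "{z. ybar \<in> M z}"
  obtain \<kappa> \<delta> where "\<kappa> > 0" "\<delta> > 0" and bound: "\<And>x. x \<in> cball xbar \<delta> \<Longrightarrow> M x \<noteq> {} \<Longrightarrow>
      infdist x ?S \<le> \<kappa> * infdist ybar (M x) powr q"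
    using subregular unfolding q_subregular_def by blast
  have "?S \<noteq> {}" using subregular unfolding q_subregular_def by blast
  have "\<exists>z. ybar \<in> M z \<and> dist x z < 2 * \<kappa> * dist ybar v powr q"
    if "x \<in> cball xbar \<delta>" "v \<in> M x" "v \<noteq> ybar" for x v
  proof -
    have "infdist ybar (M x) powr q \<le> dist ybar v powr q"
      using infdist_le[OF that(2)] \<open>q \<ge> 0\<close> by (intro powr_mono2) (auto simp: infdist_nonneg)
    then have "infdist x ?S \<le> \<kappa> * dist ybar v powr q"
      using bound[OF that(1)] that(2) \<open>\<kappa> > 0\<close> by (force intro: order_trans mult_left_mono)
    also have "\<dots> < 2 * \<kappa> * dist ybar v powr q" using \<open>\<kappa> > 0\<close> that(3) by simp
    finally show ?thesis using infdist_less_imp_ex[OF \<open>?S \<noteq> {}\<close>] by blast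
  qed
  with \<open>\<kappa> > 0\<close> \<open>\<delta> > 0\<close> that[of "2 * \<kappa>"] show thesis by simp
qed

lemma KL_exponent_at_local_minE:
  assumes KL: "KL_exponent F \<theta> xbar" and local_min: "\<exists>\<delta>>0. \<forall>x\<in>ball xbar \<delta>. F xbar \<le> F x"
    and Fxbar: "F xbar = ereal Fb"
  obtains R \<tau> c where "R > 0" "\<tau> > 0" "c > 0" "\<theta> < 1" "\<And>y. y \<in> cball xbar R \<Longrightarrow> ereal Fb \<le> F y"
    "\<And>z. z \<in> cball xbar R \<Longrightarrow> ereal Fb < F z \<Longrightarrow> F z < ereal (Fb + \<tau>) \<Longrightarrow>
      limiting_subdiff F z \<noteq> {} \<Longrightarrow>
      1 \<le> c * (1 - \<theta>) * real_of_ereal (F z - ereal Fb) powr (- \<theta>) * infdist 0 (limiting_subdiff F z)"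
proof -
  obtain \<delta>1 w c where "\<delta>1 > 0" "w > 0" "c > 0" "\<theta> < 1" and KL_at: "\<And>x. x \<in> cball xbar \<delta>1 \<Longrightarrow>
      F xbar < F x \<Longrightarrow> F x < F xbar + w \<Longrightarrow> limiting_subdiff F x \<noteq> {} \<Longrightarrow>
      1 \<le> c * (1 - \<theta>) * real_of_ereal (F x - F xbar) powr (- \<theta>) * infdist 0 (limiting_subdiff F x)"
    using KL unfolding KL_exponent_def by blast
  obtain \<delta>2 where "\<delta>2 > 0" and min: "\<And>x. x \<in> ball xbar \<delta>2 \<Longrightarrow> F xbar \<le> F x"
    using local_min by blast
  obtain \<tau> where "0 < ereal \<tau>" "ereal \<tau> < w" using ereal_dense2[OF \<open>w > 0\<close>] by blast
  define R where "R = min \<delta>1 (\<delta>2 / 2)"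
  show thesis
  proof (rule that[of R \<tau> c])
    show "R > 0" "\<tau> > 0" using \<open>\<delta>1 > 0\<close> \<open>\<delta>2 > 0\<close> \<open>0 < ereal \<tau>\<close> by (simp_all add: R_def)
    show "ereal Fb \<le> F y" if "y \<in> cball xbar R" for y
      using min[of y] that \<open>\<delta>2 > 0\<close> Fxbar by (simp add: R_def)
    fix z assume z: "z \<in> cball xbar R" "ereal Fb < F z" "F z < ereal (Fb + \<tau>)" "limiting_subdiff F z \<noteq> {}"
    have "ereal (Fb + \<tau>) \<le> ereal Fb + w" using \<open>ereal \<tau> < w\<close> by (cases w) auto
    then show "1 \<le> c * (1 - \<theta>) * real_of_ereal (F z - ereal Fb) powr (- \<theta>) * infdist 0 (limiting_subdiff F z)"
      using KL_at[of z] z Fxbar by (auto simp: R_def)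
  qed fact+
qed

section \<open>Proximal points of the desingularised function\<close>

(* Here \<phi>(s) = c s^(1-\<theta>) is the desingularising function of the KL inequality, and z is a
   minimiser of \<phi>(F - Fb) + |\<cdot> - x|\<^sup>2/(2\<gamma>) over a compact part of a sublevel set of F. *)

lemma prox_point_exists:
  fixes F :: "'a::euclidean_space \<Rightarrow> ereal"
  assumes lsc: "lsc_fun F" and cont: "continuous_on (edom F) F" and "compact K"
    and floor: "\<And>y. y \<in> K \<Longrightarrow> ereal Fb \<le> F y" and x: "x \<in> K" "F x \<le> ereal M"
    and \<theta>: "0 \<le> \<theta>" "\<theta> < 1" and "\<gamma> > 0"
  obtains z s where "z \<in> K" "F z = ereal (Fb + s)" "0 \<le> s"
    "\<And>y u. y \<in> K \<Longrightarrow> F y = ereal u \<Longrightarrow> u \<le> M \<Longrightarrow>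
       c * s powr (1 - \<theta>) + (norm (z - x))\<^sup>2 / (2 * \<gamma>) \<le> c * (u - Fb) powr (1 - \<theta>) + (norm (y - x))\<^sup>2 / (2 * \<gamma>)"
proof -
  define D where "D = K \<inter> {y. F y \<le> ereal M}"
  define \<Phi> where "\<Phi> y = c * (real_of_ereal (F y) - Fb) powr (1 - \<theta>) + (norm (y - x))\<^sup>2 / (2 * \<gamma>)" for y
  have finite_on_D: "F y = ereal (real_of_ereal (F y))" "Fb \<le> real_of_ereal (F y)" if "y \<in> D" for y
    using floor[of y] that by (cases "F y"; auto simp: D_def)+
  have "compact D"
    unfolding D_def by (intro compact_Int_closed \<open>compact K\<close> closed_sublevel_if_lsc_fun lsc)
  have "D \<subseteq> edom F" unfolding D_def edom_def by (force intro: le_less_trans[of _ "ereal M"])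
  moreover have "\<bar>F y\<bar> \<noteq> \<infinity>" if "y \<in> D" for y by (subst finite_on_D(1)[OF that]) simp
  ultimately have "continuous_on D (real_of_ereal \<circ> F)"
    using continuous_on_iff_real[of D F] continuous_on_subset[OF cont] by blast
  then have "continuous_on D (\<lambda>y. (real_of_ereal (F y) - Fb) powr (1 - \<theta>))"
    using finite_on_D(2) \<theta> by (intro continuous_on_powr') (auto simp: o_def intro: continuous_intros)
  moreover have "continuous_on D (\<lambda>y. (norm (y - x))\<^sup>2 / (2 * \<gamma>))"
    using \<open>\<gamma> > 0\<close> by (intro continuous_intros) auto
  ultimately have "continuous_on D \<Phi>"
    unfolding \<Phi>_def by (intro continuous_on_add continuous_on_mult continuous_on_const)
  moreover have "x \<in> D" using x by (simp add: D_def)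
  ultimately obtain z where "z \<in> D" and zmin: "\<And>y. y \<in> D \<Longrightarrow> \<Phi> z \<le> \<Phi> y"
    using continuous_attains_inf[OF \<open>compact D\<close>] by blast
  show thesis
  proof (rule that[of z "real_of_ereal (F z) - Fb"])
    show "z \<in> K" "F z = ereal (Fb + (real_of_ereal (F z) - Fb))" "0 \<le> real_of_ereal (F z) - Fb"
      using \<open>z \<in> D\<close> finite_on_D[OF \<open>z \<in> D\<close>] by (simp_all add: D_def)
    fix y u assume "y \<in> K" "F y = ereal u" "u \<le> M"
    then show "c * (real_of_ereal (F z) - Fb) powr (1 - \<theta>) + (norm (z - x))\<^sup>2 / (2 * \<gamma>)
        \<le> c * (u - Fb) powr (1 - \<theta>) + (norm (y - x))\<^sup>2 / (2 * \<gamma>)"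
      using zmin[of y] by (simp add: D_def \<Phi>_def)
  qed
qed

lemma prox_inequality_lower_bound:
  fixes x y z :: "'a::real_inner"
  assumes c: "c > 0" and \<theta>: "0 \<le> \<theta>" "\<theta> < 1" and \<gamma>: "\<gamma> > 0" and s: "s > 0" and "Fb \<le> u"
    and min: "c * s powr (1 - \<theta>) + (norm (z - x))\<^sup>2 / (2 * \<gamma>)
      \<le> c * (u - Fb) powr (1 - \<theta>) + (norm (y - x))\<^sup>2 / (2 * \<gamma>)"
  defines "P \<equiv> c * (1 - \<theta>) * s powr (- \<theta>)"
  shows "Fb + s + inner ((1 / (\<gamma> * P)) *\<^sub>R (x - z)) (y - z) - (norm (y - z))\<^sup>2 / (2 * \<gamma> * P) \<le> u"
proof -
  have "P > 0" using c \<theta> s by (simp add: P_def)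
  have "(u - Fb) powr (1 - \<theta>) \<le> s powr (1 - \<theta>) + (1 - \<theta>) * s powr (- \<theta>) * (u - Fb - s)"
    using powr_le_tangent[of "1 - \<theta>" "u - Fb" s] \<theta> s \<open>Fb \<le> u\<close> by simp
  then have "c * (u - Fb) powr (1 - \<theta>) \<le> c * (s powr (1 - \<theta>) + (1 - \<theta>) * s powr (- \<theta>) * (u - Fb - s))"
    using c by (intro mult_left_mono) auto
  then have "c * (u - Fb) powr (1 - \<theta>) \<le> c * s powr (1 - \<theta>) + P * (u - Fb - s)"
    unfolding P_def by (simp add: algebra_simps)
  with min have "((norm (z - x))\<^sup>2 - (norm (y - x))\<^sup>2) / (2 * \<gamma>) \<le> P * (u - Fb - s)"
    by (simp add: diff_divide_distrib)
  moreover have "(norm (z - x))\<^sup>2 - (norm (y - x))\<^sup>2 = 2 * inner (x - z) (y - z) - (norm (y - z))\<^sup>2"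
    by (simp add: power2_norm_eq_inner inner_diff_left inner_diff_right inner_commute algebra_simps)
  ultimately have "(2 * inner (x - z) (y - z) - (norm (y - z))\<^sup>2) / (2 * \<gamma> * P) \<le> u - Fb - s"
    using \<gamma> \<open>P > 0\<close> by (simp add: pos_divide_le_eq ac_simps)
  then show ?thesis using \<gamma> \<open>P > 0\<close> by (simp add: diff_divide_distrib)
qed

lemma prox_point_frechet_subgradient:
  fixes F :: "'a::real_inner \<Rightarrow> ereal"
  assumes c: "c > 0" and \<theta>: "0 \<le> \<theta>" "\<theta> < 1" and \<gamma>: "\<gamma> > 0" and s: "s > 0"
    and Fz: "F z = ereal (Fb + s)" and r: "r > 0" and M: "Fb + s < M"
    and prox: "\<And>y. y \<in> ball z r \<Longrightarrow> F y \<le> ereal M \<Longrightarrow> \<exists>u\<ge>Fb. F y = ereal u \<and>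
       c * s powr (1 - \<theta>) + (norm (z - x))\<^sup>2 / (2 * \<gamma>)
         \<le> c * (u - Fb) powr (1 - \<theta>) + (norm (y - x))\<^sup>2 / (2 * \<gamma>)"
  shows "(1 / (\<gamma> * (c * (1 - \<theta>) * s powr (- \<theta>)))) *\<^sub>R (x - z) \<in> frechet_subdiff F z"
proof -
  define P where "P = c * (1 - \<theta>) * s powr (- \<theta>)"
  define v where "v = (1 / (\<gamma> * P)) *\<^sub>R (x - z)"
  have "P > 0" using c \<theta> s by (simp add: P_def)
  have "norm v + 1 > 0" using norm_ge_zero[of v] by linarith
  have "ereal (Fb + s + inner v (y - z) - \<epsilon> * norm (y - z)) \<le> F y"
    if "\<epsilon> > 0" and y: "norm (y - z) < min r (min ((M - (Fb + s)) / (norm v + 1)) (2 * \<gamma> * P * \<epsilon>))"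
    for \<epsilon> y
  proof (cases "F y \<le> ereal M")
    case False
    have "(norm v + 1) * norm (y - z) < M - (Fb + s)"
      using y \<open>norm v + 1 > 0\<close> by (simp add: pos_less_divide_eq mult.commute)
    moreover have "inner v (y - z) \<le> norm v * norm (y - z)" by (simp add: norm_cauchy_schwarz)
    moreover have "norm v * norm (y - z) \<le> (norm v + 1) * norm (y - z)" by (simp add: distrib_right)
    moreover have "0 \<le> \<epsilon> * norm (y - z)" using \<open>\<epsilon> > 0\<close> by simp
    ultimately have "Fb + s + inner v (y - z) - \<epsilon> * norm (y - z) < M" by linarith
    then have "ereal (Fb + s + inner v (y - z) - \<epsilon> * norm (y - z)) < ereal M" by simp
    with False show ?thesis by (metis less_imp_le not_le order.strict_trans)
  next
    case True
    then obtain u where "Fb \<le> u" "F y = ereal u" and min: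
      "c * s powr (1 - \<theta>) + (norm (z - x))\<^sup>2 / (2 * \<gamma>) \<le> c * (u - Fb) powr (1 - \<theta>) + (norm (y - x))\<^sup>2 / (2 * \<gamma>)"
      using prox[of y] y by (auto simp: dist_norm norm_minus_commute)
    have "Fb + s + inner v (y - z) - (norm (y - z))\<^sup>2 / (2 * \<gamma> * P) \<le> u"
      using prox_inequality_lower_bound[OF c \<theta> \<gamma> s \<open>Fb \<le> u\<close> min] by (simp add: v_def P_def)
    moreover have "norm (y - z) * norm (y - z) \<le> (2 * \<gamma> * P * \<epsilon>) * norm (y - z)"
      using y by (intro mult_right_mono) auto
    then have "(norm (y - z))\<^sup>2 / (2 * \<gamma> * P) \<le> \<epsilon> * norm (y - z)"
      using \<gamma> \<open>P > 0\<close> by (simp add: pos_divide_le_eq power2_eq_square ac_simps)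
    ultimately show ?thesis using \<open>F y = ereal u\<close> by simp
  qed
  moreover have "0 < min r (min ((M - (Fb + s)) / (norm v + 1)) (2 * \<gamma> * P * \<epsilon>))" if "\<epsilon> > 0" for \<epsilon>
    using r M \<gamma> \<open>P > 0\<close> \<open>norm v + 1 > 0\<close> that by simp
  ultimately have "\<exists>\<delta>>0. \<forall>y. norm (y - z) < \<delta> \<longrightarrow>
      ereal (real_of_ereal (F z) + inner v (y - z) - \<epsilon> * norm (y - z)) \<le> F y" if "\<epsilon> > 0" for \<epsilon>
    using that Fz \<gamma> \<open>P > 0\<close>
    by (intro exI[of _ "min r (min ((M - (Fb + s)) / (norm v + 1)) (2 * \<gamma> * P * \<epsilon>))"]) auto
  then show ?thesis using Fz unfolding frechet_subdiff_def v_def P_def by simp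
qed

lemma prox_step_bounds:
  fixes c s t r \<theta> :: real
  assumes "c > 0" "0 \<le> \<theta>" "\<theta> < 1" "0 \<le> s" "0 < t" "0 \<le> r"
    and step: "c * s powr (1 - \<theta>) + r\<^sup>2 / (2 * (8 * (c * t powr (1 - \<theta>)))) \<le> c * t powr (1 - \<theta>)"
  shows "s \<le> t" "r \<le> 4 * (c * t powr (1 - \<theta>))"
proof -
  define h where "h = c * t powr (1 - \<theta>)"
  have "h > 0" using assms by (simp add: h_def)
  have "0 \<le> c * s powr (1 - \<theta>)" "0 \<le> r\<^sup>2 / (2 * (8 * h))" using \<open>c > 0\<close> \<open>h > 0\<close> by simp_all
  then have "c * s powr (1 - \<theta>) \<le> c * t powr (1 - \<theta>)" "r\<^sup>2 / (2 * (8 * h)) \<le> h"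
    using step unfolding h_def by linarith+
  then have "s powr (1 - \<theta>) \<le> t powr (1 - \<theta>)" "r\<^sup>2 \<le> (4 * h)\<^sup>2"
    using \<open>c > 0\<close> \<open>h > 0\<close> by (simp_all add: pos_divide_le_eq power2_eq_square)
  then show "s \<le> t" "r \<le> 4 * (c * t powr (1 - \<theta>))"
    using \<open>h > 0\<close> \<open>0 < t\<close> \<open>0 \<le> r\<close> \<open>\<theta> < 1\<close> powr_less_mono2[of "1 - \<theta>" t s]
    by (auto intro: power2_le_imp_le simp: not_le[symmetric] h_def)
qed

lemma prox_point_at_floor_if_KL:
  fixes F :: "'a::real_inner \<Rightarrow> ereal"
  assumes c: "c > 0" and \<theta>: "0 \<le> \<theta>" "\<theta> < 1" and \<gamma>: "\<gamma> > 0" and "0 \<le> s"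
    and Fz: "F z = ereal (Fb + s)" and r: "r > 0" and M: "Fb + s < M"
    and prox: "\<And>y. y \<in> ball z r \<Longrightarrow> F y \<le> ereal M \<Longrightarrow> \<exists>u\<ge>Fb. F y = ereal u \<and>
       c * s powr (1 - \<theta>) + (norm (z - x))\<^sup>2 / (2 * \<gamma>)
         \<le> c * (u - Fb) powr (1 - \<theta>) + (norm (y - x))\<^sup>2 / (2 * \<gamma>)"
    and KL: "s > 0 \<Longrightarrow> limiting_subdiff F z \<noteq> {} \<Longrightarrow> 1 \<le> c * (1 - \<theta>) * s powr (- \<theta>) * infdist 0 (limiting_subdiff F z)"
    and close: "norm (x - z) < \<gamma>"
  shows "s = 0"
proof (rule ccontr)
  assume "s \<noteq> 0"
  then have "s > 0" using \<open>0 \<le> s\<close> by simp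
  define P where "P = c * (1 - \<theta>) * s powr (- \<theta>)"
  define v where "v = (1 / (\<gamma> * P)) *\<^sub>R (x - z)"
  have "v \<in> limiting_subdiff F z"
    using prox_point_frechet_subgradient[OF c \<theta> \<gamma> \<open>s > 0\<close> Fz r M prox]
      frechet_subdiff_subset_limiting_subdiff
    unfolding v_def P_def by blast
  have "1 \<le> P * infdist 0 (limiting_subdiff F z)"
    using KL \<open>s > 0\<close> \<open>v \<in> limiting_subdiff F z\<close> by (auto simp: P_def)
  also have "\<dots> \<le> P * norm v"
    using infdist_le[OF \<open>v \<in> limiting_subdiff F z\<close>, of 0] c \<theta> \<open>s > 0\<close>
    by (intro mult_left_mono) (simp_all add: P_def)
  also have "\<dots> = norm (x - z) / \<gamma>" using c \<theta> \<open>s > 0\<close> \<gamma> by (simp add: v_def P_def)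
  finally show False using close \<gamma> by simp
qed

lemma critical_point_near_if_KL:
  fixes F :: "'a::euclidean_space \<Rightarrow> ereal"
  assumes lsc: "lsc_fun F" and cont: "continuous_on (edom F) F"
    and c: "c > 0" and \<theta>: "0 \<le> \<theta>" "\<theta> < 1" and R: "R > 0"
    and floor: "\<And>y. y \<in> cball xbar R \<Longrightarrow> ereal Fb \<le> F y"
    and KL: "\<And>z. z \<in> cball xbar R \<Longrightarrow> ereal Fb < F z \<Longrightarrow> F z < ereal (Fb + \<tau>) \<Longrightarrow>
        limiting_subdiff F z \<noteq> {} \<Longrightarrow>
        1 \<le> c * (1 - \<theta>) * real_of_ereal (F z - ereal Fb) powr (- \<theta>) * infdist 0 (limiting_subdiff F z)"
    and x: "dist xbar x \<le> R / 2" "F x = ereal (Fb + t)" "0 \<le> t" "t < \<tau>"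
      "8 * (c * t powr (1 - \<theta>)) < R"
  obtains z where "0 \<in> limiting_subdiff F z" "dist x z \<le> 4 * (c * t powr (1 - \<theta>))"
proof (cases "t = 0")
  case True
  then have "0 \<in> limiting_subdiff F x"
    using x R by (intro zero_limiting_subdiff_if_floor_attained[OF floor]) auto
  then show thesis using that[of x] c by simp
next
  case False
  define h where "h = c * t powr (1 - \<theta>)"
  define \<gamma> where "\<gamma> = 8 * h"
  have "t > 0" "h > 0" "\<gamma> > 0" using False x c by (auto simp: h_def \<gamma>_def)
  have xR: "x \<in> cball xbar R" and xM: "F x \<le> ereal (Fb + t + 1)" using x R by simp_all
  obtain z s where "z \<in> cball xbar R" and Fz: "F z = ereal (Fb + s)" and "0 \<le> s"
    and prox: "\<And>y u. y \<in> cball xbar R \<Longrightarrow> F y = ereal u \<Longrightarrow> u \<le> Fb + t + 1 \<Longrightarrow>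
      c * s powr (1 - \<theta>) + (norm (z - x))\<^sup>2 / (2 * \<gamma>) \<le> c * (u - Fb) powr (1 - \<theta>) + (norm (y - x))\<^sup>2 / (2 * \<gamma>)"
    using prox_point_exists[OF lsc cont compact_cball floor xR xM \<theta> \<open>\<gamma> > 0\<close>] by blast
  have "c * s powr (1 - \<theta>) + (norm (z - x))\<^sup>2 / (2 * \<gamma>) \<le> h"
    using prox[OF xR \<open>F x = ereal (Fb + t)\<close>] by (simp add: h_def)
  then have "s \<le> t" and close: "norm (z - x) \<le> 4 * h"
    using prox_step_bounds[OF c \<theta> \<open>0 \<le> s\<close> \<open>t > 0\<close> norm_ge_zero] by (simp_all add: \<gamma>_def h_def)
  have "dist xbar z \<le> dist xbar x + dist x z" by (rule dist_triangle)
  then have "z \<in> ball xbar R" using x close by (simp add: h_def dist_norm norm_minus_commute)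
  have "s = 0"
  proof (rule prox_point_at_floor_if_KL[where F = F and z = z, OF c \<theta> \<open>\<gamma> > 0\<close> \<open>0 \<le> s\<close> Fz])
    show "R - dist xbar z > 0" "Fb + s < Fb + t + 1" using \<open>z \<in> ball xbar R\<close> \<open>s \<le> t\<close> by auto
    show "norm (x - z) < \<gamma>" using close \<open>h > 0\<close> by (simp add: \<gamma>_def norm_minus_commute)
    show "1 \<le> c * (1 - \<theta>) * s powr - \<theta> * infdist 0 (limiting_subdiff F z)"
      if "s > 0" "limiting_subdiff F z \<noteq> {}"
      using KL[OF _ _ _ that(2)] \<open>z \<in> ball xbar R\<close> that(1) \<open>s \<le> t\<close> \<open>t < \<tau>\<close> Fz by simp
    fix y assume "y \<in> ball z (R - dist xbar z)" "F y \<le> ereal (Fb + t + 1)"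
    moreover from this have "y \<in> cball xbar R" using dist_triangle[of xbar y z] by (simp add: dist_commute)
    ultimately show "\<exists>u\<ge>Fb. F y = ereal u \<and> c * s powr (1 - \<theta>) + (norm (z - x))\<^sup>2 / (2 * \<gamma>)
        \<le> c * (u - Fb) powr (1 - \<theta>) + (norm (y - x))\<^sup>2 / (2 * \<gamma>)"
      using floor[of y] prox[of y] by (cases "F y") auto
  qed
  then have "0 \<in> limiting_subdiff F z"
    using Fz \<open>z \<in> ball xbar R\<close> by (intro zero_limiting_subdiff_if_floor_attained[OF floor]) auto
  then show thesis using that close by (simp add: h_def dist_norm norm_minus_commute)
qed

lemma infdist_critical_le_if_KL:
  fixes F :: "'a::euclidean_space \<Rightarrow> ereal"
  assumes lsc: "lsc_fun F" and cont: "continuous_on (edom F) F"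
    and c: "c > 0" and \<theta>: "0 < \<theta>" "\<theta> < 1" and R: "R > 0"
    and floor: "\<And>y. y \<in> cball xbar R \<Longrightarrow> ereal Fb \<le> F y"
    and KL: "\<And>z. z \<in> cball xbar R \<Longrightarrow> ereal Fb < F z \<Longrightarrow> F z < ereal (Fb + \<tau>) \<Longrightarrow>
        limiting_subdiff F z \<noteq> {} \<Longrightarrow>
        1 \<le> c * (1 - \<theta>) * real_of_ereal (F z - ereal Fb) powr (- \<theta>) * infdist 0 (limiting_subdiff F z)"
    and x: "dist xbar x \<le> R / 2" "F x = ereal (Fb + t)" "0 \<le> t" "t < \<tau>"
      "8 * (c * t powr (1 - \<theta>)) < R" "limiting_subdiff F x \<noteq> {}"
  shows "infdist x {z. 0 \<in> limiting_subdiff F z}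
    \<le> 4 * c * (c * (1 - \<theta>)) powr ((1 - \<theta>) / \<theta>) * infdist 0 (limiting_subdiff F x) powr ((1 - \<theta>) / \<theta>)"
proof -
  obtain z where "0 \<in> limiting_subdiff F z" "dist x z \<le> 4 * (c * t powr (1 - \<theta>))"
    using critical_point_near_if_KL[OF lsc cont c less_imp_le[OF \<theta>(1)] \<theta>(2) R floor KL x(1-5)] by blast
  then have "infdist x {z. 0 \<in> limiting_subdiff F z} \<le> 4 * c * t powr (1 - \<theta>)"
    using infdist_le2[of z] by simp
  also have "\<dots> \<le> 4 * c * ((c * (1 - \<theta>)) powr ((1 - \<theta>) / \<theta>)
      * infdist 0 (limiting_subdiff F x) powr ((1 - \<theta>) / \<theta>))"
  proof (intro mult_left_mono powr_le_if_KL_inequality[OF \<theta> c x(3) infdist_nonneg])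
    assume "t > 0"
    moreover have "x \<in> cball xbar R" using x(1) R by simp
    ultimately show "1 \<le> c * (1 - \<theta>) * t powr (- \<theta>) * infdist 0 (limiting_subdiff F x)"
      using KL[of x] x by simp
  qed (use c in simp)
  finally show ?thesis by (simp add: ac_simps)
qed

section \<open>Smooth plus convex functions\<close>

(* Outside U the values of f are irrelevant, since g = \<infinity> there. *)
locale smooth_plus_convex =
  fixes F g :: "'a::euclidean_space \<Rightarrow> ereal" and f :: "'a \<Rightarrow> real" and f' :: "'a \<Rightarrow> 'a"
    and U :: "'a set"
  assumes F_eq: "F = (\<lambda>x. ereal (f x) + g x)"
    and open_U: "open U" and dom_subset: "edom g \<subseteq> U"
    and has_gradient: "\<And>x. x \<in> U \<Longrightarrow> (f has_derivative inner (f' x)) (at x)"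
    and gradient_locally_lipschitz:
      "\<And>x. x \<in> U \<Longrightarrow> \<exists>r>0. \<exists>L. cball x r \<subseteq> U \<and> L-lipschitz_on (cball x r) f'"
    and lsc_F: "lsc_fun F"
    and g_not_MInf: "\<And>x. g x \<noteq> -\<infinity>"
    and convex_dom: "convex (edom g)"
    and convex_on_dom: "convex_on (edom g) (\<lambda>x. real_of_ereal (g x))"
    and continuous_on_dom: "continuous_on (edom g) g"
begin

abbreviation G :: "'a \<Rightarrow> real" where "G x \<equiv> real_of_ereal (g x)"

lemma F_dom: "x \<in> edom g \<Longrightarrow> F x = ereal (f x + G x)"
  using g_not_MInf[of x] unfolding F_eq edom_def by (cases "g x") auto

lemma edom_F: "edom F = edom g"
  using g_not_MInf unfolding F_eq edom_def by (force elim: ereal_cases[of "g _"])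

lemma continuous_on_dom_F: "continuous_on (edom g) F"
proof -
  have "continuous_on (edom g) G"
    using continuous_on_dom continuous_on_iff_real[of "edom g" g] g_not_MInf
    by (force simp: edom_def o_def)
  moreover have "continuous_on (edom g) f"
    using has_gradient dom_subset has_derivative_continuous
    by (blast intro: continuous_at_imp_continuous_on)
  ultimately have "continuous_on (edom g) (\<lambda>x. ereal (f x + G x))"
    by (intro continuous_on_ereal continuous_intros)
  then show ?thesis by (rule continuous_on_eq) (simp add: F_dom)
qed

lemma F_less_near:
  assumes "x0 \<in> edom g" "F x0 < e"
  obtains \<delta> where "\<delta> > 0" "\<And>x. x \<in> edom g \<Longrightarrow> dist x x0 < \<delta> \<Longrightarrow> F x < e"
proof -
  have "(F \<longlongrightarrow> F x0) (at x0 within edom g)"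
    using continuous_on_dom_F assms(1) by (simp add: continuous_on_def)
  then have "\<forall>\<^sub>F x in at x0 within edom g. F x < e" using assms(2) by (rule order_tendstoD)
  then obtain \<delta> where "\<delta> > 0" "\<forall>x\<in>edom g. x \<noteq> x0 \<and> dist x x0 < \<delta> \<longrightarrow> F x < e"
    unfolding eventually_at by blast
  with assms(2) show thesis by (metis that)
qed

lemma gradient_continuous: "x \<in> U \<Longrightarrow> isCont f' x"
proof -
  assume "x \<in> U"
  then obtain r L where "r > 0" "L-lipschitz_on (cball x r) f'"
    using gradient_locally_lipschitz by blast
  then show "isCont f' x"
    using continuous_on_interior[OF lipschitz_on_continuous_on] by fastforce
qed

lemma frechet_subdiff_in_dom: "v \<in> frechet_subdiff F x \<Longrightarrow> x \<in> edom g"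
  using edom_F unfolding frechet_subdiff_def edom_def by (auto simp: less_top)

lemma frechet_subgradient_ineq:
  assumes v: "v \<in> frechet_subdiff F z" and y: "y \<in> edom g"
  shows "G z + inner (v - f' z) (y - z) \<le> G y"
proof -
  have "z \<in> U" using frechet_subdiff_in_dom[OF v] dom_subset by blast
  then have "v - f' z \<in> frechet_subdiff g z"
    using frechet_subdiff_add_differentiable[OF v[unfolded F_eq] has_gradient] by blast
  then show ?thesis
    using convex_subgradient_if_frechet_subgradient[OF convex_dom convex_on_dom g_not_MInf _ y] by blast
qed

lemma limiting_subdiff_in_dom:
  assumes "\<xi> \<in> limiting_subdiff F x" "x \<in> U"
  shows "x \<in> edom g"
proof -
  obtain xk vk where xk: "xk \<longlonglongrightarrow> x" and Fk: "(\<lambda>k. F (xk k)) \<longlonglongrightarrow> F x"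
    and vk: "\<And>k. vk k \<in> frechet_subdiff F (xk k)" and "vk \<longlonglongrightarrow> \<xi>"
    using assms(1) unfolding limiting_subdiff_def by blast
  have dom: "xk k \<in> edom g" for k using frechet_subdiff_in_dom[OF vk] .
  (* The subgradient inequality towards the fixed point xk 0 bounds F (xk k) from above. *)
  define R where "R k = f (xk k) + G (xk 0) - inner (vk k - f' (xk k)) (xk 0 - xk k)" for k
  have "(\<lambda>k. f (xk k)) \<longlonglongrightarrow> f x" "(\<lambda>k. f' (xk k)) \<longlonglongrightarrow> f' x"
    using has_derivative_continuous[OF has_gradient[OF \<open>x \<in> U\<close>]] gradient_continuous[OF \<open>x \<in> U\<close>]
    by (simp_all add: isCont_tendsto_compose[OF _ xk])
  then have "R \<longlonglongrightarrow> f x + G (xk 0) - inner (\<xi> - f' x) (xk 0 - x)"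
    unfolding R_def by (intro tendsto_intros xk \<open>vk \<longlonglongrightarrow> \<xi>\<close>)
  then have R: "(\<lambda>k. ereal (R k)) \<longlonglongrightarrow> ereal (f x + G (xk 0) - inner (\<xi> - f' x) (xk 0 - x))"
    by (simp only: lim_ereal)
  have le: "F (xk k) \<le> ereal (R k)" for k
  proof -
    have "G (xk k) \<le> G (xk 0) - inner (vk k - f' (xk k)) (xk 0 - xk k)"
      using frechet_subgradient_ineq[OF vk[of k] dom[of 0]] by linarith
    then show ?thesis using F_dom[OF dom] by (simp add: R_def)
  qed
  have "F x \<le> ereal (f x + G (xk 0) - inner (\<xi> - f' x) (xk 0 - x))"
    by (intro LIMSEQ_le[OF Fk R] exI[of _ 0] allI impI le)
  then have "F x < \<infinity>" by (rule le_less_trans) simp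
  then show ?thesis using edom_F unfolding edom_def by blast
qed

lemma limiting_subgradient_ineq:
  assumes "\<xi> \<in> limiting_subdiff F x" "x \<in> U" "y \<in> edom g"
  shows "G x + inner (\<xi> - f' x) (y - x) \<le> G y"
proof -
  obtain xk vk where xk: "xk \<longlonglongrightarrow> x" and Fk: "(\<lambda>k. F (xk k)) \<longlonglongrightarrow> F x"
    and vk: "\<And>k. vk k \<in> frechet_subdiff F (xk k)" and "vk \<longlonglongrightarrow> \<xi>"
    using assms(1) unfolding limiting_subdiff_def by blast
  have dom: "xk k \<in> edom g" for k using frechet_subdiff_in_dom[OF vk] .
  have f_lim: "(\<lambda>k. f (xk k)) \<longlonglongrightarrow> f x" and f'_lim: "(\<lambda>k. f' (xk k)) \<longlonglongrightarrow> f' x"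
    using has_derivative_continuous[OF has_gradient[OF \<open>x \<in> U\<close>]] gradient_continuous[OF \<open>x \<in> U\<close>]
    by (simp_all add: isCont_tendsto_compose[OF _ xk])
  have "(\<lambda>k. ereal (f (xk k) + G (xk k))) \<longlonglongrightarrow> ereal (f x + G x)"
    using Fk unfolding F_dom[OF dom] F_dom[OF limiting_subdiff_in_dom[OF assms(1,2)]] .
  then have "(\<lambda>k. f (xk k) + G (xk k)) \<longlonglongrightarrow> f x + G x" by (simp only: lim_ereal)
  from tendsto_diff[OF this f_lim] have "(\<lambda>k. G (xk k)) \<longlonglongrightarrow> G x" by simp
  then have "(\<lambda>k. G (xk k) + inner (vk k - f' (xk k)) (y - xk k)) \<longlonglongrightarrow> G x + inner (\<xi> - f' x) (y - x)"
    using f'_lim by (intro tendsto_add tendsto_inner tendsto_diff tendsto_const xk \<open>vk \<longlonglongrightarrow> \<xi>\<close>)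
  then show ?thesis
    using frechet_subgradient_ineq[OF vk assms(3)] by (intro LIMSEQ_le_const2) auto
qed

lemma limiting_subgradient_value_gap:
  assumes "x0 \<in> U"
  obtains r L where "r > 0" "L \<ge> 0" "cball x0 r \<subseteq> U"
    "\<And>x z \<xi>. x \<in> cball x0 r \<Longrightarrow> z \<in> cball x0 r \<Longrightarrow> z \<in> edom g \<Longrightarrow> \<xi> \<in> limiting_subdiff F x \<Longrightarrow>
       f x + G x - (f z + G z) \<le> L * (norm (z - x))\<^sup>2 + norm \<xi> * norm (z - x)"
proof -
  obtain r L where "r > 0" "cball x0 r \<subseteq> U" and lip: "L-lipschitz_on (cball x0 r) f'"
    using gradient_locally_lipschitz[OF assms] by blast
  have "f x + G x - (f z + G z) \<le> L * (norm (z - x))\<^sup>2 + norm \<xi> * norm (z - x)"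
    if "x \<in> cball x0 r" "z \<in> cball x0 r" "z \<in> edom g" "\<xi> \<in> limiting_subdiff F x" for x z \<xi>
  proof -
    have "(f has_derivative inner (f' y)) (at y within cball x0 r)" if "y \<in> cball x0 r" for y
      using \<open>cball x0 r \<subseteq> U\<close> has_gradient that by (blast intro: has_derivative_at_withinI)
    then have "\<bar>f z - f x - inner (f' x) (z - x)\<bar> \<le> L * (norm (z - x))\<^sup>2"
      using that(1,2) by (intro lipschitz_gradient_taylor_bound[OF convex_cball _ lip])
    moreover have "G x + inner (\<xi> - f' x) (z - x) \<le> G z"
      using limiting_subgradient_ineq that \<open>cball x0 r \<subseteq> U\<close> by blast
    moreover have "- inner \<xi> (z - x) \<le> norm \<xi> * norm (z - x)"
      using Cauchy_Schwarz_ineq2[of \<xi> "z - x"] by simp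
    ultimately show ?thesis by (simp add: inner_diff_left)
  qed
  with \<open>r > 0\<close> \<open>cball x0 r \<subseteq> U\<close> lipschitz_on_nonneg[OF lip] that show thesis by blast
qed

lemma KL_inequality_for_small_subgradients:
  assumes xbar: "xbar \<in> edom g" and "q > 0"
    and \<theta>: "0 < \<theta>" "1 / (2 * q) \<le> \<theta>" "1 / (1 + q) \<le> \<theta>"
    and values_on_critical:
      "\<exists>\<epsilon>>0. \<forall>y\<in>cball xbar \<epsilon>. y \<in> edom g \<longrightarrow> 0 \<in> limiting_subdiff F y \<longrightarrow> F y \<le> F xbar"
    and subregular: "q_subregular (limiting_subdiff F) q xbar 0"
  obtains \<delta> \<eta> C where "\<delta> > 0" "\<eta> > 0" "C > 0" "\<And>x \<xi>. x \<in> cball xbar \<delta> \<Longrightarrow> F xbar \<le> F x \<Longrightarrow>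
    \<xi> \<in> limiting_subdiff F x \<Longrightarrow> norm \<xi> < \<eta> \<Longrightarrow> real_of_ereal (F x - F xbar) powr \<theta> \<le> C * norm \<xi>"
proof -
  obtain \<kappa> \<delta>s where "\<kappa> > 0" "\<delta>s > 0" and near: "\<And>x \<xi>. x \<in> cball xbar \<delta>s \<Longrightarrow>
      \<xi> \<in> limiting_subdiff F x \<Longrightarrow> \<xi> \<noteq> 0 \<Longrightarrow> \<exists>z. 0 \<in> limiting_subdiff F z \<and> dist x z < \<kappa> * dist 0 \<xi> powr q"
    using q_subregular_solution_near[OF subregular less_imp_le[OF \<open>q > 0\<close>]] by blast
  obtain \<epsilon> where "\<epsilon> > 0" and critical_values:
      "\<And>y. y \<in> cball xbar \<epsilon> \<Longrightarrow> y \<in> edom g \<Longrightarrow> 0 \<in> limiting_subdiff F y \<Longrightarrow> F y \<le> F xbar"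
    using values_on_critical by blast
  obtain r L where "r > 0" "L \<ge> 0" "cball xbar r \<subseteq> U" and gap: "\<And>x z \<xi>. x \<in> cball xbar r \<Longrightarrow>
      z \<in> cball xbar r \<Longrightarrow> z \<in> edom g \<Longrightarrow> \<xi> \<in> limiting_subdiff F x \<Longrightarrow>
      f x + G x - (f z + G z) \<le> L * (norm (z - x))\<^sup>2 + norm \<xi> * norm (z - x)"
    using limiting_subgradient_value_gap[of xbar] xbar dom_subset by blast
  define m where "m = min \<epsilon> r"
  have "m > 0" using \<open>\<epsilon> > 0\<close> \<open>r > 0\<close> by (simp add: m_def)
  then obtain \<eta> where "\<eta> > 0" and small: "\<And>a. 0 \<le> a \<Longrightarrow> a < \<eta> \<Longrightarrow> \<kappa> * a powr q < m / 2"
    using powr_less_if_small[OF \<open>q > 0\<close> \<open>\<kappa> > 0\<close>, of "m / 2"] by auto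
  define \<delta> where "\<delta> = min \<delta>s (m / 2)"
  define C where "C = (L * \<kappa>\<^sup>2 + \<kappa>) powr \<theta>"
  have bound: "real_of_ereal (F x - F xbar) powr \<theta> \<le> C * norm \<xi>"
    if x: "x \<in> cball xbar \<delta>" "F xbar \<le> F x" and \<xi>: "\<xi> \<in> limiting_subdiff F x" "norm \<xi> < min 1 \<eta>" for x \<xi>
  proof -
    have "x \<in> cball xbar r" "x \<in> cball xbar \<epsilon>" using x(1) \<open>m > 0\<close> by (auto simp: \<delta>_def m_def)
    then have "x \<in> edom g" using limiting_subdiff_in_dom[OF \<xi>(1)] \<open>cball xbar r \<subseteq> U\<close> by blast
    define t where "t = f x + G x - (f xbar + G xbar)"
    have t: "real_of_ereal (F x - F xbar) = t" "0 \<le> t"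
      using x(2) F_dom[OF xbar] F_dom[OF \<open>x \<in> edom g\<close>] by (simp_all add: t_def)
    show ?thesis
    proof (cases "\<xi> = 0")
      case True
      then have "F x \<le> F xbar" using critical_values \<open>x \<in> cball xbar \<epsilon>\<close> \<open>x \<in> edom g\<close> \<xi>(1) by blast
      then have "f x + G x \<le> f xbar + G xbar" using F_dom[OF xbar] F_dom[OF \<open>x \<in> edom g\<close>] by simp
      then have "t = 0" using t(2) by (simp add: t_def)
      then show ?thesis using t(1) True by simp
    next
      case False
      then obtain z where "0 \<in> limiting_subdiff F z" and "dist x z < \<kappa> * norm \<xi> powr q"
        using near[OF _ \<xi>(1)] x(1) by (auto simp: \<delta>_def)
      moreover have "\<kappa> * norm \<xi> powr q < m / 2" using small \<xi>(2) by simp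
      ultimately have "z \<in> cball xbar r" "z \<in> cball xbar \<epsilon>"
        using x(1) dist_triangle[of xbar z x] by (auto simp: \<delta>_def m_def)
      then have "z \<in> edom g"
        using limiting_subdiff_in_dom \<open>0 \<in> limiting_subdiff F z\<close> \<open>cball xbar r \<subseteq> U\<close> by blast
      then have "F z \<le> F xbar"
        using critical_values \<open>z \<in> cball xbar \<epsilon>\<close> \<open>0 \<in> limiting_subdiff F z\<close> by blast
      then have "f z + G z \<le> f xbar + G xbar" using F_dom[OF \<open>z \<in> edom g\<close>] F_dom[OF xbar] by simp
      then have "t \<le> L * (norm (z - x))\<^sup>2 + norm \<xi> * norm (z - x)"
        using gap[OF \<open>x \<in> cball xbar r\<close> \<open>z \<in> cball xbar r\<close> \<open>z \<in> edom g\<close> \<xi>(1)] by (simp add: t_def)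
      then have "t powr \<theta> \<le> C * norm \<xi>"
        unfolding C_def using \<open>dist x z < \<kappa> * norm \<xi> powr q\<close> False \<xi>(2) t(2) \<open>L \<ge> 0\<close> \<open>q > 0\<close> \<theta>
        by (intro powr_le_if_quadratic_gap[where \<rho> = "norm (z - x)"])
          (auto simp: dist_norm norm_minus_commute)
      then show ?thesis using t by simp
    qed
  qed
  have "0 < L * \<kappa>\<^sup>2 + \<kappa>" using \<open>L \<ge> 0\<close> \<open>\<kappa> > 0\<close> by (simp add: add_nonneg_pos)
  then have "\<delta> > 0" "C > 0" using \<open>\<delta>s > 0\<close> \<open>m > 0\<close> by (simp_all add: \<delta>_def C_def)
  with \<open>\<eta> > 0\<close> show thesis by (intro that[of \<delta> "min 1 \<eta>" C] bound) auto
qed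

theorem KL_exponent_if_subregular:
  assumes xbar: "xbar \<in> edom g" and "q > 0"
    and \<theta>: "1 / (2 * q) \<le> \<theta>" "1 / (1 + q) \<le> \<theta>" "\<theta> < 1"
    and values_on_critical:
      "\<exists>\<epsilon>>0. \<forall>y\<in>cball xbar \<epsilon>. y \<in> edom g \<longrightarrow> 0 \<in> limiting_subdiff F y \<longrightarrow> F y \<le> F xbar"
    and subregular: "q_subregular (limiting_subdiff F) q xbar 0"
  shows "KL_exponent F \<theta> xbar"
proof -
  have "\<theta> > 0" using \<theta>(2) \<open>q > 0\<close> by (smt (verit) divide_pos_pos)
  obtain \<delta> \<eta> C where "\<delta> > 0" "\<eta> > 0" "C > 0" and small_subgradients: "\<And>x \<xi>. x \<in> cball xbar \<delta> \<Longrightarrow>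
      F xbar \<le> F x \<Longrightarrow> \<xi> \<in> limiting_subdiff F x \<Longrightarrow> norm \<xi> < \<eta> \<Longrightarrow>
      real_of_ereal (F x - F xbar) powr \<theta> \<le> C * norm \<xi>"
    using KL_inequality_for_small_subgradients[OF xbar \<open>q > 0\<close> \<open>\<theta> > 0\<close> \<theta>(1,2) values_on_critical
        subregular] by blast
  define C' where "C' = max C (1 / \<eta>)"
  define c where "c = C' / (1 - \<theta>)"
  have "C' > 0" using \<open>C > 0\<close> by (simp add: C'_def)
  have "1 \<le> c * (1 - \<theta>) * real_of_ereal (F x - F xbar) powr (- \<theta>) * infdist 0 (limiting_subdiff F x)"
    if x: "x \<in> cball xbar \<delta>" "F xbar < F x" "F x < F xbar + 1" "limiting_subdiff F x \<noteq> {}" for x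
  proof -
    define t where "t = real_of_ereal (F x - F xbar)"
    have "0 < t" "t < 1" using x(2,3) unfolding t_def by (cases "F x"; cases "F xbar"; simp)+
    have "t powr \<theta> \<le> C' * norm \<xi>" if "\<xi> \<in> limiting_subdiff F x" for \<xi>
    proof (cases "norm \<xi> < \<eta>")
      case True
      then have "t powr \<theta> \<le> C * norm \<xi>"
        using small_subgradients[OF x(1) _ that] x(2) by (simp add: t_def)
      also have "\<dots> \<le> C' * norm \<xi>" by (simp add: C'_def mult_right_mono)
      finally show ?thesis .
    next
      case False
      have "t powr \<theta> \<le> 1" using \<open>0 < t\<close> \<open>t < 1\<close> \<open>\<theta> > 0\<close> by (intro powr_le1) auto
      also have "\<dots> \<le> 1 / \<eta> * norm \<xi>" using False \<open>\<eta> > 0\<close> by simp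
      also have "\<dots> \<le> C' * norm \<xi>" using mult_right_mono[of "1 / \<eta>" C' "norm \<xi>"] by (simp add: C'_def)
      finally show ?thesis .
    qed
    then have "t powr \<theta> / C' \<le> infdist 0 (limiting_subdiff F x)"
      using \<open>C' > 0\<close> by (intro infdist_geI x(4)) (simp add: field_simps)
    then have "C' * t powr (- \<theta>) * (t powr \<theta> / C') \<le> C' * t powr (- \<theta>) * infdist 0 (limiting_subdiff F x)"
      using \<open>C' > 0\<close> by (intro mult_left_mono) auto
    moreover have "C' * t powr (- \<theta>) * (t powr \<theta> / C') = 1"
      using \<open>C' > 0\<close> \<open>t > 0\<close> by (simp add: powr_minus field_simps)
    ultimately show ?thesis using \<theta>(3) by (simp add: c_def t_def)
  qed
  moreover have "limiting_subdiff F xbar \<noteq> {}" using subregular unfolding q_subregular_def by blast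
  ultimately show ?thesis
    unfolding KL_exponent_def using \<open>\<theta> > 0\<close> \<theta>(3) \<open>\<delta> > 0\<close> \<open>C' > 0\<close>
    by (intro conjI exI[of _ \<delta>] exI[of _ 1] exI[of _ c]) (auto simp: c_def)
qed

theorem subregular_if_KL_exponent:
  assumes xbar: "xbar \<in> edom g" and local_min: "\<exists>\<delta>>0. \<forall>x\<in>ball xbar \<delta>. F xbar \<le> F x"
    and KL: "KL_exponent F \<theta> xbar" and "\<theta> > 0"
  shows "q_subregular (limiting_subdiff F) ((1 - \<theta>) / \<theta>) xbar 0"
proof -
  define Fb where "Fb = f xbar + G xbar"
  have Fxbar: "F xbar = ereal Fb" using F_dom[OF xbar] by (simp add: Fb_def)
  obtain R \<tau> c where "R > 0" "\<tau> > 0" "c > 0" "\<theta> < 1"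
    and floor: "\<And>y. y \<in> cball xbar R \<Longrightarrow> ereal Fb \<le> F y"
    and KL_R: "\<And>z. z \<in> cball xbar R \<Longrightarrow> ereal Fb < F z \<Longrightarrow> F z < ereal (Fb + \<tau>) \<Longrightarrow>
      limiting_subdiff F z \<noteq> {} \<Longrightarrow>
      1 \<le> c * (1 - \<theta>) * real_of_ereal (F z - ereal Fb) powr (- \<theta>) * infdist 0 (limiting_subdiff F z)"
    using KL_exponent_at_local_minE[OF KL local_min Fxbar] by blast
  have crit: "0 \<in> limiting_subdiff F xbar"
    using floor \<open>R > 0\<close> Fxbar by (intro zero_limiting_subdiff_if_floor_attained[where R = R]) auto
  have "1 - \<theta> > 0" "8 * c > 0" using \<open>\<theta> < 1\<close> \<open>c > 0\<close> by simp_all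
  then obtain \<tau>1 where "\<tau>1 > 0" and small: "\<And>t. 0 \<le> t \<Longrightarrow> t < \<tau>1 \<Longrightarrow> 8 * c * t powr (1 - \<theta>) < R"
    using powr_less_if_small[OF _ _ \<open>R > 0\<close>] by blast
  have "F xbar < ereal (Fb + min \<tau> \<tau>1)" using Fxbar \<open>\<tau> > 0\<close> \<open>\<tau>1 > 0\<close> by simp
  then obtain \<delta>3 where "\<delta>3 > 0"
    and near: "\<And>x. x \<in> edom g \<Longrightarrow> dist x xbar < \<delta>3 \<Longrightarrow> F x < ereal (Fb + min \<tau> \<tau>1)"
    using F_less_near[OF xbar] by blast
  obtain ru where "ru > 0" "cball xbar ru \<subseteq> U" using open_U xbar dom_subset open_contains_cball by blast
  define \<delta> where "\<delta> = min (R / 2) (min (\<delta>3 / 2) ru)"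
  define \<kappa> where "\<kappa> = 4 * c * (c * (1 - \<theta>)) powr ((1 - \<theta>) / \<theta>)"
  have "infdist x {z. 0 \<in> limiting_subdiff F z} \<le> \<kappa> * infdist 0 (limiting_subdiff F x) powr ((1 - \<theta>) / \<theta>)"
    if x: "x \<in> cball xbar \<delta>" "limiting_subdiff F x \<noteq> {}" for x
  proof -
    have "x \<in> edom g" using x limiting_subdiff_in_dom \<open>cball xbar ru \<subseteq> U\<close> by (force simp: \<delta>_def)
    define t where "t = f x + G x - Fb"
    have Fx: "F x = ereal (Fb + t)" using F_dom[OF \<open>x \<in> edom g\<close>] by (simp add: t_def)
    have "x \<in> cball xbar R" "dist xbar x \<le> R / 2" using x(1) \<open>R > 0\<close> by (auto simp: \<delta>_def)
    then have "0 \<le> t" "t < \<tau>" "t < \<tau>1"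
      using floor[of x] near[OF \<open>x \<in> edom g\<close>] x(1) Fx \<open>\<delta>3 > 0\<close> by (auto simp: \<delta>_def dist_commute)
    have cont: "continuous_on (edom F) F" using continuous_on_dom_F edom_F by simp
    have "8 * (c * t powr (1 - \<theta>)) < R" using small[OF \<open>0 \<le> t\<close> \<open>t < \<tau>1\<close>] by (simp add: mult.assoc)
    then show ?thesis
      unfolding \<kappa>_def using infdist_critical_le_if_KL[OF lsc_F cont \<open>c > 0\<close> \<open>\<theta> > 0\<close> \<open>\<theta> < 1\<close> \<open>R > 0\<close>
        floor KL_R \<open>dist xbar x \<le> R / 2\<close> Fx \<open>0 \<le> t\<close> \<open>t < \<tau>\<close> _ x(2)] by blast
  qed
  moreover have "\<delta> > 0" "\<kappa> > 0" using \<open>R > 0\<close> \<open>\<delta>3 > 0\<close> \<open>ru > 0\<close> \<open>c > 0\<close> \<open>\<theta> < 1\<close>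
    by (simp_all add: \<delta>_def \<kappa>_def)
  ultimately show ?thesis unfolding q_subregular_def using crit by blast
qed

end

lemma smooth_plus_convex_affine_composition:
  fixes A :: "real^'n^'m" and \<psi> :: "real^'m \<Rightarrow> ereal" and g :: "real^'n \<Rightarrow> ereal"
  assumes \<psi>: "lsc_fun \<psi>" "\<And>y. \<psi> y \<noteq> -\<infinity>" and g: "lsc_fun g" "\<And>x. g x \<noteq> -\<infinity>"
    and "open U" "edom g \<subseteq> U" "open V" and UV: "(\<lambda>x. A *v x - b) ` U \<subseteq> V"
    and p: "\<forall>y\<in>V. \<psi> y = ereal (p y)" "\<forall>y\<in>V. (p has_derivative (\<lambda>h. inner (gp y) h)) (at y)"
    and gp: "\<forall>y\<in>V. (gp has_derivative (\<lambda>h. H y *v h)) (at y)" "continuous_on V H"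
    and "convex (edom g)" "convex_on (edom g) (\<lambda>x. real_of_ereal (g x))" "continuous_on (edom g) g"
  shows "smooth_plus_convex (\<lambda>x. \<psi> (A *v x - b) + g x) g (\<lambda>x. p (A *v x - b))
    (\<lambda>x. transpose A *v gp (A *v x - b)) U"
proof
  show "(\<lambda>x. \<psi> (A *v x - b) + g x) = (\<lambda>x. ereal (p (A *v x - b)) + g x)"
  proof
    fix x
    show "\<psi> (A *v x - b) + g x = ereal (p (A *v x - b)) + g x"
    proof (cases "x \<in> U")
      case False
      then have "g x = \<infinity>" using \<open>edom g \<subseteq> U\<close> by (auto simp: edom_def top.not_eq_extremum)
      then show ?thesis using \<psi>(2)[of "A *v x - b"] by simp
    qed (use UV p(1) in auto)
  qed
  have "continuous_on UNIV (\<lambda>x. A *v x - b)" by (intro continuous_intros)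
  then show "lsc_fun (\<lambda>x. \<psi> (A *v x - b) + g x)"
    using lsc_fun_compose_continuous[OF \<psi>(1)] \<psi>(2) g by (intro lsc_fun_add)
  fix x assume "x \<in> U"
  then have "A *v x - b \<in> V" using UV by blast
  then show "((\<lambda>x. p (A *v x - b)) has_derivative inner (transpose A *v gp (A *v x - b))) (at x)"
    using p(2) by (intro has_gradient_affine_precomposition) blast
  show "\<exists>r>0. \<exists>L. cball x r \<subseteq> U \<and> L-lipschitz_on (cball x r) (\<lambda>x. transpose A *v gp (A *v x - b))"
    using gp(1) \<open>x \<in> U\<close>
    by (intro gradient_affine_precomposition_locally_lipschitz[OF \<open>open U\<close> \<open>open V\<close> UV _ gp(2)]) blast
qed (fact assms)+

theorem proposition2p6:
  fixes A :: "real^'n^'m" and b :: "real^'m"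
    and \<psi> :: "real^'m \<Rightarrow> ereal" and g :: "real^'n \<Rightarrow> ereal"
    and F :: "real^'n \<Rightarrow> ereal" and S :: "(real^'n) set"
    and xbar :: "real^'n" and q :: real
  assumes psi_proper: "proper_fun \<psi>" and psi_lsc: "lsc_fun \<psi>"
    and g_proper: "proper_fun g" and g_lsc: "lsc_fun g"
    and F_def: "F = (\<lambda>x. \<psi> (A *v x - b) + g x)"
    and smooth: "\<exists>U V. open U \<and> edom g \<subseteq> U \<and> open V \<and> (\<lambda>x. A *v x - b) ` U \<subseteq> V \<and>
        (\<exists>p gp H. (\<forall>y\<in>V. \<psi> y = ereal (p y)) \<and>
           (\<forall>y\<in>V. (p has_derivative (\<lambda>h. inner (gp y) h)) (at y)) \<and>
           (\<forall>y\<in>V. (gp has_derivative (\<lambda>h. H y *v h)) (at y)) \<and> continuous_on V H)"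
    and g_convex: "convex (edom g)" and g_convex_on: "convex_on (edom g) (\<lambda>x. real_of_ereal (g x))"
    and g_cont: "continuous_on (edom g) g"
    and F_lb: "(INF x. F x) > -\<infinity>"
    and F_level_bdd: "\<forall>\<alpha>::real. bounded {x. F x \<le> ereal \<alpha>}"
    and S_def: "S = {x \<in> edom g. 0 \<in> limiting_subdiff F x}"
    and xbar_S: "xbar \<in> S" and q_pos: "q > 0"
  shows "(max (1 / (2 * q)) (1 / (1 + q)) < 1 \<and> (\<forall>x'\<in>S. \<exists>\<epsilon>>0. \<forall>y\<in>S \<inter> cball x' \<epsilon>. F y \<le> F x') \<and>
            q_subregular (limiting_subdiff F) q xbar 0
          \<longrightarrow> KL_exponent F (max (1 / (2 * q)) (1 / (1 + q))) xbar)
       \<and> (1/2 < q \<and> q \<le> 1 \<and> KL_exponent F (1 / (2 * q)) xbar \<and>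
            (\<exists>\<delta>>0. \<forall>x\<in>ball xbar \<delta>. F xbar \<le> F x)
          \<longrightarrow> q_subregular (limiting_subdiff F) (2 * q - 1) xbar 0)"
proof -
  obtain U V p gp H where "open U" "edom g \<subseteq> U" "open V" "(\<lambda>x. A *v x - b) ` U \<subseteq> V"
    "\<forall>y\<in>V. \<psi> y = ereal (p y)" "\<forall>y\<in>V. (p has_derivative (\<lambda>h. inner (gp y) h)) (at y)"
    "\<forall>y\<in>V. (gp has_derivative (\<lambda>h. H y *v h)) (at y)" "continuous_on V H"
    using smooth by blast
  moreover have "\<And>y. \<psi> y \<noteq> -\<infinity>" "\<And>x. g x \<noteq> -\<infinity>"
    using psi_proper g_proper unfolding proper_fun_def by blast+
  ultimately interpret smooth_plus_convex F g "\<lambda>x. p (A *v x - b)" "\<lambda>x. transpose A *v gp (A *v x - b)" U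
    unfolding F_def using psi_lsc g_lsc g_convex g_convex_on g_cont
    by (intro smooth_plus_convex_affine_composition)
  have xbar: "xbar \<in> edom g" using xbar_S S_def by simp
  show ?thesis
  proof (intro conjI impI)
    assume hyp: "max (1 / (2 * q)) (1 / (1 + q)) < 1 \<and> (\<forall>x'\<in>S. \<exists>\<epsilon>>0. \<forall>y\<in>S \<inter> cball x' \<epsilon>. F y \<le> F x') \<and>
        q_subregular (limiting_subdiff F) q xbar 0"
    then have "\<exists>\<epsilon>>0. \<forall>y\<in>cball xbar \<epsilon>. y \<in> edom g \<longrightarrow> 0 \<in> limiting_subdiff F y \<longrightarrow> F y \<le> F xbar"
      using xbar_S unfolding S_def by blast
    with hyp show "KL_exponent F (max (1 / (2 * q)) (1 / (1 + q))) xbar"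
      using xbar q_pos by (intro KL_exponent_if_subregular) auto
  next
    assume "1/2 < q \<and> q \<le> 1 \<and> KL_exponent F (1 / (2 * q)) xbar \<and> (\<exists>\<delta>>0. \<forall>x\<in>ball xbar \<delta>. F xbar \<le> F x)"
    then have "q_subregular (limiting_subdiff F) ((1 - 1 / (2 * q)) / (1 / (2 * q))) xbar 0"
      using xbar q_pos by (intro subregular_if_KL_exponent) auto
    moreover have "(1 - 1 / (2 * q)) / (1 / (2 * q)) = 2 * q - 1" using q_pos by (simp add: field_simps)
    ultimately show "q_subregular (limiting_subdiff F) (2 * q - 1) xbar 0" by simp
  qed
qed

end
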